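(* Let $n\ge 4$. For every cycle $C$ of length 8 in $Q_n$ there is an automorphism of $Q_n$ mapping $C$ onto exactly one of the following seven cycles, which are pairwise non-isomorphic (no automorphism of $Q_n$ maps one onto another): $C_8^1=(0,1,3,2,6,7,5,4)$, $C_8^2=(0,1,3,2,6,14,12,8)$, $C_8^3=(0,1,3,2,6,14,12,4)$, $C_8^4=(0,1,3,2,6,4,12,8)$, $C_8^5=(0,1,3,7,15,14,12,8)$, $C_8^6=(0,1,3,7,15,14,12,4)$, $C_8^7=(0,1,3,7,6,14,10,8)$. Moreover, the number of edges of $Q_n$ joining the parity-0 vertices of the cycle to vertices outside the cycle is $4n-12$ for $C_8^1$, $4n-9$ for $C_8^2$, $4n-10$ for $C_8^3$ and for $C_8^4$, and $4n-8$ for each of $C_8^5$, $C_8^6$, $C_8^7$.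
   Context: $Q_n$ is the $n$-dimensional hypercube whose vertices are the binary strings of length $n$, identified with the integers $0,\dots,2^n-1$ via binary expansion; two vertices are adjacent iff their labels differ in exactly one bit. The parity of a vertex is the number of ones in its label modulo 2. Cycles are written as sequences of vertices. The automorphisms of $Q_n$ are the maps $x\mapsto g_\pi(x\oplus v)$, where $\oplus$ is bitwise XOR with a fixed vertex $v$ and $g_\pi$ permutes the coordinate positions by a permutation $\pi$ of $\{0,\dots,n-1\}$. *)

theory Defs
  imports Main
begin

text \<open>Vertices of Q_n are the naturals 0..2^n-1; bit i of a label is coordinate i.\<close>

definition qvert :: "nat \<Rightarrow> nat set" where
  "qvert n = {..<2^n}"

definition qadj :: "nat \<Rightarrow> nat \<Rightarrow> nat \<Rightarrow> bool" where
  "qadj n x y \<longleftrightarrow> x \<in> qvert n \<and> y \<in> qvert n \<and>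
     card {i. i < n \<and> bit x i \<noteq> bit y i} = 1"

definition qparity :: "nat \<Rightarrow> nat \<Rightarrow> nat" where
  "qparity n x = card {i. i < n \<and> bit x i} mod 2"

definition qcycle :: "nat \<Rightarrow> nat list \<Rightarrow> bool" where
  "qcycle n C \<longleftrightarrow> length C \<ge> 3 \<and> distinct C \<and> set C \<subseteq> qvert n \<and>
     (\<forall>i < length C. qadj n (C ! i) (C ! ((i + 1) mod length C)))"

definition cycle_edges :: "nat list \<Rightarrow> nat set set" where
  "cycle_edges C = {{C ! i, C ! ((i + 1) mod length C)} | i. i < length C}"

definition perm_bits :: "nat \<Rightarrow> (nat \<Rightarrow> nat) \<Rightarrow> nat \<Rightarrow> nat" where
  "perm_bits n \<pi> y = (\<Sum>i<n. if bit y i then 2 ^ (\<pi> i) else 0)"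

definition qaut :: "nat \<Rightarrow> (nat \<Rightarrow> nat) \<Rightarrow> bool" where
  "qaut n f \<longleftrightarrow> (\<exists>\<pi> v. bij_betw \<pi> {..<n} {..<n} \<and> v \<in> qvert n \<and>
     (\<forall>x \<in> qvert n. f x = perm_bits n \<pi> (xor x v)))"

definition maps_cycle_onto :: "nat \<Rightarrow> nat list \<Rightarrow> nat list \<Rightarrow> bool" where
  "maps_cycle_onto n C D \<longleftrightarrow> (\<exists>f. qaut n f \<and> cycle_edges (map f C) = cycle_edges D)"

definition even_out_edges :: "nat \<Rightarrow> nat list \<Rightarrow> nat" where
  "even_out_edges n C = card {(u, w). u \<in> set C \<and> qparity n u = 0 \<and>
     w \<in> qvert n \<and> w \<notin> set C \<and> qadj n u w}"

definition C8 :: "nat \<Rightarrow> nat list" where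
  "C8 k = (if k = 1 then [0,1,3,2,6,7,5,4]
      else if k = 2 then [0,1,3,2,6,14,12,8]
      else if k = 3 then [0,1,3,2,6,14,12,4]
      else if k = 4 then [0,1,3,2,6,4,12,8]
      else if k = 5 then [0,1,3,7,15,14,12,8]
      else if k = 6 then [0,1,3,7,15,14,12,4]
      else [0,1,3,7,6,14,10,8])"

end

theory Submission
  imports Defs
begin

text \<open>Walking along an 8-cycle flips one coordinate per step, so the cycle is determined up to
  translation by its cyclic string of flipped coordinates. Permuting coordinates turns that string
  into a restricted growth string on at most four labels, and an exhaustive search over these
  strings shows that every closed walk without repeated vertices has a rotation relabelling to one
  of seven strings, whose walks from \<open>0\<close> are the seven listed cycles. Automorphisms preserve
  Hamming distance, so the sum of pairwise distances of the vertex set is an invariant, and it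
  takes seven different values on the seven cycles. All seven lie in \<open>Q\<^sub>4\<close>, where their
  four even vertices each gain \<open>n - 4\<close> outward edges in \<open>Q\<^sub>n\<close>.\<close>

section \<open>Bits and adjacency\<close>

lemma less_power2_iff_bits: "(x::nat) < 2 ^ n \<longleftrightarrow> (\<forall>i. n \<le> i \<longrightarrow> \<not> bit x i)"
proof
  assume "x < 2 ^ n"
  then have "take_bit n x = x" by (simp add: take_bit_nat_eq_self)
  then show "\<forall>i. n \<le> i \<longrightarrow> \<not> bit x i" by (metis bit_take_bit_iff not_le)
next
  assume "\<forall>i. n \<le> i \<longrightarrow> \<not> bit x i"
  then have "take_bit n x = x"
    by (intro bit_eqI) (auto simp: bit_take_bit_iff not_le)
  then show "x < 2 ^ n" by (metis take_bit_nat_eq_self_iff)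
qed

lemma bit_eq_below_power2:
  assumes "(x::nat) < 2 ^ n" "y < 2 ^ n" "\<And>i. i < n \<Longrightarrow> bit x i = bit y i"
  shows "x = y"
  using assms by (intro bit_eqI) (metis less_power2_iff_bits not_le)

lemma xor_power2_less: "(x::nat) < 2 ^ n \<Longrightarrow> i < n \<Longrightarrow> xor x (2 ^ i) < 2 ^ n"
  by (auto simp: less_power2_iff_bits bit_xor_iff bit_exp_iff)

lemma card_less_eq_length_filter: "card {i. i < n \<and> P i} = length (filter P [0..<n])"
proof -
  have "set (filter P [0..<n]) = {i. i < n \<and> P i}" by auto
  then show ?thesis by (metis distinct_card distinct_filter distinct_upt)
qed

definition hamming :: "nat \<Rightarrow> nat \<Rightarrow> nat \<Rightarrow> nat" where
  "hamming n x y = card {i. i < n \<and> bit x i \<noteq> bit y i}"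

lemma hamming_eq_length_filter: "hamming n x y = length (filter (\<lambda>i. bit x i \<noteq> bit y i) [0..<n])"
  by (simp add: hamming_def card_less_eq_length_filter)

lemma Collect_less_bounded:
  assumes "(m::nat) \<le> n" "\<And>i. m \<le> i \<Longrightarrow> \<not> P i"
  shows "{i. i < n \<and> P i} = {i. i < m \<and> P i}"
proof -
  have "i < n \<and> P i \<longleftrightarrow> i < m \<and> P i" for i
    using assms by (meson less_le_trans not_le)
  then show ?thesis by simp
qed

lemma hamming_bounded:
  "(x::nat) < 2 ^ m \<Longrightarrow> y < 2 ^ m \<Longrightarrow> m \<le> n \<Longrightarrow> hamming n x y = hamming m x y"
  unfolding hamming_def by (subst Collect_less_bounded) (auto simp: less_power2_iff_bits)

lemma qparity_bounded:
  "(x::nat) < 2 ^ m \<Longrightarrow> m \<le> n \<Longrightarrow> qparity n x = qparity m x"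
  unfolding qparity_def by (subst Collect_less_bounded) (auto simp: less_power2_iff_bits)

lemma qparity_eq_length_filter: "qparity n x = length (filter (bit x) [0..<n]) mod 2"
  by (simp add: qparity_def card_less_eq_length_filter)

lemma hamming_xor_power2: "i < n \<Longrightarrow> hamming n x (xor x (2 ^ i)) = 1"
proof -
  assume "i < n"
  then have "{j. j < n \<and> bit x j \<noteq> bit (xor x (2 ^ i)) j} = {i}"
    by (auto simp: bit_xor_iff bit_exp_iff)
  then show ?thesis by (simp add: hamming_def)
qed

lemma hamming_one_imp_xor_power2:
  assumes "(x::nat) < 2 ^ n" "y < 2 ^ n" "hamming n x y = 1"
  obtains i where "i < n" "y = xor x (2 ^ i)"
proof -
  obtain i where i: "{j. j < n \<and> bit x j \<noteq> bit y j} = {i}"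
    using assms(3) unfolding hamming_def by (meson card_1_singletonE)
  then have "i < n" by blast
  moreover have "y = xor x (2 ^ i)"
    using i by (intro bit_eq_below_power2[OF assms(2) xor_power2_less[OF assms(1) \<open>i < n\<close>]])
      (auto simp: bit_xor_iff bit_exp_iff)
  ultimately show thesis by (rule that)
qed

lemma qadj_iff_xor: "qadj n x y \<longleftrightarrow> x \<in> qvert n \<and> (\<exists>i<n. y = xor x (2 ^ i))"
proof -
  have "y \<in> qvert n \<and> hamming n x y = 1 \<longleftrightarrow> (\<exists>i<n. y = xor x (2 ^ i))" if "x \<in> qvert n"
    using that hamming_one_imp_xor_power2[of x n y]
    by (auto simp: qvert_def hamming_xor_power2 xor_power2_less)
  then show ?thesis unfolding qadj_def hamming_def[symmetric] by blast
qed

lemma hamming_zero_imp_eq: "(x::nat) < 2 ^ n \<Longrightarrow> y < 2 ^ n \<Longrightarrow> hamming n x y = 0 \<Longrightarrow> x = y"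
  unfolding hamming_def by (rule bit_eq_below_power2) auto

section \<open>Automorphisms and the distance-sum invariant\<close>

lemma bit_sum_power2:
  assumes "finite S" "inj_on g S"
  shows "bit (\<Sum>i\<in>S. 2 ^ g i :: nat) j \<longleftrightarrow> j \<in> g ` S"
  using assms
proof (induction S arbitrary: j rule: finite_induct)
  case empty
  then show ?case by simp
next
  case (insert a S)
  then have IH: "bit (\<Sum>i\<in>S. 2 ^ g i :: nat) j' \<longleftrightarrow> j' \<in> g ` S" for j'
    by simp
  have "g a \<notin> g ` S" using insert by auto
  then have "bit (2 ^ g a + (\<Sum>i\<in>S. 2 ^ g i) :: nat) j
      \<longleftrightarrow> bit (2 ^ g a :: nat) j \<or> bit (\<Sum>i\<in>S. 2 ^ g i :: nat) j"
    by (intro bit_disjunctive_add_iff) (auto simp: IH bit_exp_iff)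
  then show ?case using insert IH by (auto simp: bit_exp_iff)
qed

lemma bit_perm_bits:
  assumes "inj_on \<pi> {..<n}"
  shows "bit (perm_bits n \<pi> y) j \<longleftrightarrow> (\<exists>i<n. \<pi> i = j \<and> bit y i)"
proof -
  have "perm_bits n \<pi> y = (\<Sum>i\<in>{i. i < n \<and> bit y i}. 2 ^ \<pi> i)"
    unfolding perm_bits_def by (rule sum.mono_neutral_cong_right) auto
  moreover have "inj_on \<pi> {i. i < n \<and> bit y i}" using assms by (rule inj_on_subset) auto
  ultimately show ?thesis by (auto simp: bit_sum_power2)
qed

lemma perm_bits_xor:
  assumes "inj_on \<pi> {..<n}"
  shows "perm_bits n \<pi> (xor x y) = xor (perm_bits n \<pi> x) (perm_bits n \<pi> y)"
proof (rule bit_eqI)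
  fix j
  have "\<And>i i'. i < n \<Longrightarrow> i' < n \<Longrightarrow> \<pi> i = j \<Longrightarrow> \<pi> i' = j \<Longrightarrow> i' = i"
    using assms by (auto simp: inj_on_def)
  then show "bit (perm_bits n \<pi> (xor x y)) j = bit (xor (perm_bits n \<pi> x) (perm_bits n \<pi> y)) j"
    unfolding bit_xor_iff bit_perm_bits[OF assms] by blast
qed

lemma perm_bits_power2: "inj_on \<pi> {..<n} \<Longrightarrow> i < n \<Longrightarrow> perm_bits n \<pi> (2 ^ i) = 2 ^ \<pi> i"
  by (rule bit_eqI) (auto simp: bit_perm_bits bit_exp_iff inj_on_def)

lemma perm_bits_0 [simp]: "perm_bits n \<pi> 0 = 0"
  by (simp add: perm_bits_def)

lemma qautI: "bij_betw \<pi> {..<n} {..<n} \<Longrightarrow> v \<in> qvert n \<Longrightarrow> qaut n (\<lambda>x. perm_bits n \<pi> (xor x v))"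
  unfolding qaut_def by blast

lemma hamming_perm_bits_xor:
  assumes "bij_betw \<pi> {..<n} {..<n}"
  shows "hamming n (perm_bits n \<pi> (xor x v)) (perm_bits n \<pi> (xor y v)) = hamming n x y"
proof -
  let ?D = "{i. i < n \<and> bit x i \<noteq> bit y i}"
  have inj: "inj_on \<pi> {..<n}" and onto: "\<pi> ` {..<n} = {..<n}"
    using assms by (auto simp: bij_betw_def)
  have "bit (perm_bits n \<pi> (xor x v)) (\<pi> i) \<longleftrightarrow> bit x i \<noteq> bit v i" if "i < n" for i x
    unfolding bit_perm_bits[OF inj] using that inj by (auto simp: bit_xor_iff inj_on_def)
  then have "{i \<in> {..<n}. bit (perm_bits n \<pi> (xor x v)) (\<pi> i) \<noteq> bit (perm_bits n \<pi> (xor y v)) (\<pi> i)} = ?D"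
    by auto
  moreover have "{j. j < n \<and> Q j} = \<pi> ` {i \<in> {..<n}. Q (\<pi> i)}" for Q
    using Compr_image_eq[of \<pi> "{..<n}" Q] by (simp add: onto)
  ultimately have "{j. j < n \<and> bit (perm_bits n \<pi> (xor x v)) j \<noteq> bit (perm_bits n \<pi> (xor y v)) j} = \<pi> ` ?D"
    by (simp only:)
  moreover have "inj_on \<pi> ?D" using inj by (rule inj_on_subset) auto
  ultimately show ?thesis unfolding hamming_def by (simp add: card_image)
qed

lemma qaut_hamming:
  "qaut n f \<Longrightarrow> x \<in> qvert n \<Longrightarrow> y \<in> qvert n \<Longrightarrow> hamming n (f x) (f y) = hamming n x y"
  unfolding qaut_def using hamming_perm_bits_xor by metis

lemma qaut_inj_on: "qaut n f \<Longrightarrow> inj_on f (qvert n)"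
proof (rule inj_onI)
  fix x y assume "qaut n f" "x \<in> qvert n" "y \<in> qvert n" "f x = f y"
  then have "hamming n x y = 0" using qaut_hamming[of n f x y] by (simp add: hamming_def)
  then show "x = y" using \<open>x \<in> qvert n\<close> \<open>y \<in> qvert n\<close> hamming_zero_imp_eq by (simp add: qvert_def)
qed

lemma Union_cycle_edges: "L \<noteq> [] \<Longrightarrow> \<Union> (cycle_edges L) = set L"
proof (intro set_eqI iffI)
  fix x assume "L \<noteq> []" "x \<in> \<Union> (cycle_edges L)"
  then show "x \<in> set L" by (auto simp: cycle_edges_def)
next
  fix x assume "L \<noteq> []" "x \<in> set L"
  then obtain i where "i < length L" "x = L ! i" by (metis in_set_conv_nth)
  then show "x \<in> \<Union> (cycle_edges L)" unfolding cycle_edges_def by blast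
qed

definition distance_sum :: "nat \<Rightarrow> nat set \<Rightarrow> nat" where
  "distance_sum n V = (\<Sum>x\<in>V. \<Sum>y\<in>V. hamming n x y)"

lemma maps_cycle_onto_distance_sum:
  assumes "maps_cycle_onto n C D" "C \<noteq> []" "set C \<subseteq> qvert n"
  shows "distance_sum n (set D) = distance_sum n (set C)"
proof -
  obtain f where f: "qaut n f" "cycle_edges (map f C) = cycle_edges D"
    using assms(1) maps_cycle_onto_def by blast
  have "cycle_edges (map f C) \<noteq> {}" using assms(2) by (auto simp: cycle_edges_def)
  then have "D \<noteq> []" using f(2) by (auto simp: cycle_edges_def)
  then have img: "f ` set C = set D"
    using Union_cycle_edges[of D] Union_cycle_edges[of "map f C"] assms(2) f(2) by simp
  have inj: "inj_on f (set C)" using qaut_inj_on[OF f(1)] assms(3) by (rule inj_on_subset)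
  have "distance_sum n (set D) = (\<Sum>x\<in>set C. \<Sum>y\<in>set C. hamming n (f x) (f y))"
    unfolding distance_sum_def img[symmetric] using inj by (simp add: sum.reindex)
  also have "\<dots> = distance_sum n (set C)"
    unfolding distance_sum_def using qaut_hamming[OF f(1)] assms(3) by (intro sum.cong) auto
  finally show ?thesis .
qed

section \<open>Cycles as closed walks\<close>

fun flip_mask :: "nat list \<Rightarrow> nat" where
  "flip_mask [] = 0"
| "flip_mask (c # cs) = xor (2 ^ c) (flip_mask cs)"

fun walk :: "nat \<Rightarrow> nat list \<Rightarrow> nat list" where
  "walk x [] = []"
| "walk x (c # cs) = x # walk (xor x (2 ^ c)) cs"

fun walk_end :: "nat \<Rightarrow> nat list \<Rightarrow> nat" where
  "walk_end x [] = x"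
| "walk_end x (c # cs) = walk_end (xor x (2 ^ c)) cs"

lemma xor_xor_cancel_left: "xor (xor a b) a = (b::nat)"
  by (rule bit_eqI) (auto simp: bit_xor_iff)

lemma xor_eq_self_iff: "xor (a::nat) b = a \<longleftrightarrow> b = 0"
proof
  assume "xor a b = a"
  then have "xor a (xor a b) = xor a a" by simp
  then show "b = 0" by (simp add: xor.assoc[symmetric])
qed simp

lemma flip_mask_snoc: "flip_mask (cs @ [c]) = xor (flip_mask cs) (2 ^ c)"
  by (induction cs) (simp_all add: xor.assoc xor.commute xor.left_commute)

lemma length_walk [simp]: "length (walk x cs) = length cs"
  by (induction cs arbitrary: x) auto

lemma nth_walk: "i < length cs \<Longrightarrow> walk x cs ! i = xor x (flip_mask (take i cs))"
  by (induction cs arbitrary: x i) (auto simp: xor.assoc nth_Cons split: nat.split)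

lemma walk_end_eq_xor: "walk_end x cs = xor x (flip_mask cs)"
  by (induction cs arbitrary: x) (auto simp: xor.assoc)

lemma perm_bits_flip_mask:
  "inj_on \<pi> {..<n} \<Longrightarrow> set cs \<subseteq> {..<n} \<Longrightarrow> perm_bits n \<pi> (flip_mask cs) = flip_mask (map \<pi> cs)"
  by (induction cs) (auto simp: perm_bits_xor perm_bits_power2)

lemma cycle_edges_rotate1: "cycle_edges (rotate1 L) = cycle_edges L"
proof (cases "L = []")
  case True
  then show ?thesis by simp
next
  case False
  define m where "m = length L"
  have m: "m > 0" "length (rotate1 L) = m" using False by (auto simp: m_def)
  have rot: "{rotate1 L ! i, rotate1 L ! ((i + 1) mod m)} = {L ! ((i + 1) mod m), L ! (((i + 1) mod m + 1) mod m)}"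
    if "i < m" for i
    using that m by (simp add: m_def nth_rotate1 mod_Suc_eq)
  have edges: "cycle_edges K = (\<lambda>i. {K ! i, K ! ((i + 1) mod length K)}) ` {..<length K}" for K
    by (auto simp: cycle_edges_def)
  show ?thesis unfolding edges m(2) unfolding m_def[symmetric]
  proof (intro set_eqI iffI)
    fix E assume "E \<in> (\<lambda>i. {rotate1 L ! i, rotate1 L ! ((i + 1) mod m)}) ` {..<m}"
    then obtain i where "i < m" "E = {rotate1 L ! i, rotate1 L ! ((i + 1) mod m)}" by auto
    then show "E \<in> (\<lambda>i. {L ! i, L ! ((i + 1) mod m)}) ` {..<m}"
      using rot m by (auto intro!: image_eqI[where x="(i + 1) mod m"])
  next
    fix E assume "E \<in> (\<lambda>i. {L ! i, L ! ((i + 1) mod m)}) ` {..<m}"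
    then obtain j where j: "j < m" "E = {L ! j, L ! ((j + 1) mod m)}" by auto
    define i where "i = (if j = 0 then m - 1 else j - 1)"
    have i: "i < m" "(i + 1) mod m = j" using j m by (auto simp: i_def)
    show "E \<in> (\<lambda>i. {rotate1 L ! i, rotate1 L ! ((i + 1) mod m)}) ` {..<m}"
      using rot[OF i(1)] i j by (auto intro!: image_eqI[where x=i])
  qed
qed

lemma cycle_edges_rotate: "cycle_edges (rotate s L) = cycle_edges L"
  by (induction s) (auto simp: cycle_edges_rotate1)

lemma qcycle_directions:
  assumes "qcycle n C"
  obtains d where "\<forall>i<length C. d i < n \<and> C ! ((i + 1) mod length C) = xor (C ! i) (2 ^ d i)"
proof -
  have "\<forall>i<length C. \<exists>j. j < n \<and> C ! ((i + 1) mod length C) = xor (C ! i) (2 ^ j)"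
    using assms by (auto simp: qcycle_def qadj_iff_xor)
  then obtain d where "\<forall>i<length C. d i < n \<and> C ! ((i + 1) mod length C) = xor (C ! i) (2 ^ d i)"
    by metis
  then show thesis using that by blast
qed

context
  fixes n d and C :: "nat list"
  assumes steps: "\<forall>i<length C. d i < n \<and> C ! ((i + 1) mod length C) = xor (C ! i) (2 ^ d i)"
begin

lemma cycle_nth_rotate_directions:
  assumes "s < length C" "i \<le> length C"
  shows "C ! ((s + i) mod length C) = xor (C ! s) (flip_mask (take i (rotate s (map d [0..<length C]))))"
  using assms(2)
proof (induction i)
  case 0
  then show ?case using assms(1) by simp
next
  case (Suc i)
  let ?m = "length C" and ?D = "rotate s (map d [0..<length C])"
  have i: "i < ?m" using Suc by simp
  have lt: "(s + i) mod ?m < ?m" using assms(1) by (intro mod_less_divisor) linarith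
  then have take: "take (Suc i) ?D = take i ?D @ [d ((s + i) mod ?m)]"
    using i by (simp add: take_Suc_conv_app_nth nth_rotate del: upt_Suc)
  have "(s + Suc i) mod ?m = ((s + i) mod ?m + 1) mod ?m" by (simp add: mod_Suc_eq)
  then have "C ! ((s + Suc i) mod ?m) = xor (C ! ((s + i) mod ?m)) (2 ^ d ((s + i) mod ?m))"
    using steps lt by simp
  also have "\<dots> = xor (C ! s) (flip_mask (take (Suc i) ?D))"
    using Suc i unfolding take flip_mask_snoc by (simp add: xor.assoc)
  finally show ?case .
qed

lemma translate_rotate_cycle_eq_walk:
  assumes "s < length C" "bij_betw \<pi> {..<n} {..<n}"
  shows "map (\<lambda>x. perm_bits n \<pi> (xor x (C ! s))) (rotate s C)
           = walk 0 (map \<pi> (rotate s (map d [0..<length C])))"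
    and "walk_end 0 (map \<pi> (rotate s (map d [0..<length C]))) = 0"
proof -
  let ?m = "length C" and ?D = "rotate s (map d [0..<length C])"
  have inj: "inj_on \<pi> {..<n}" using assms(2) bij_betw_def by blast
  have setD: "set ?D \<subseteq> {..<n}" using steps by auto
  show "map (\<lambda>x. perm_bits n \<pi> (xor x (C ! s))) (rotate s C) = walk 0 (map \<pi> ?D)"
  proof (rule nth_equalityI)
    fix i assume "i < length (map (\<lambda>x. perm_bits n \<pi> (xor x (C ! s))) (rotate s C))"
    then have i: "i < ?m" by simp
    have "rotate s C ! i = C ! ((s + i) mod ?m)" using i by (simp add: nth_rotate)
    also have "\<dots> = xor (C ! s) (flip_mask (take i ?D))"
      using cycle_nth_rotate_directions[OF assms(1)] i by simp
    finally have "xor (rotate s C ! i) (C ! s) = flip_mask (take i ?D)"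
      by (simp add: xor_xor_cancel_left)
    moreover have "set (take i ?D) \<subseteq> {..<n}" using set_take_subset setD by (rule subset_trans)
    ultimately show "map (\<lambda>x. perm_bits n \<pi> (xor x (C ! s))) (rotate s C) ! i = walk 0 (map \<pi> ?D) ! i"
      using i by (simp add: nth_walk take_map perm_bits_flip_mask[OF inj])
  qed simp
  have "C ! ((s + ?m) mod ?m) = xor (C ! s) (flip_mask ?D)"
    using cycle_nth_rotate_directions[OF assms(1), of ?m] by simp
  then have "flip_mask ?D = 0"
    using assms(1) by (simp add: eq_commute[of "C ! s"] xor_eq_self_iff)
  then show "walk_end 0 (map \<pi> ?D) = 0"
    by (simp add: walk_end_eq_xor perm_bits_flip_mask[OF inj setD, symmetric])
qed

end

section \<open>Relabelling direction strings\<close>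

fun first_index :: "nat list \<Rightarrow> nat \<Rightarrow> nat" where
  "first_index [] x = 0"
| "first_index (y # ys) x = (if x = y then 0 else Suc (first_index ys x))"

fun relabel :: "nat list \<Rightarrow> nat list \<Rightarrow> nat list" where
  "relabel L [] = []"
| "relabel L (x # xs) =
     (if x \<in> set L then first_index L x # relabel L xs else length L # relabel (L @ [x]) xs)"

fun restricted_growth :: "nat \<Rightarrow> nat list \<Rightarrow> bool" where
  "restricted_growth m [] = True"
| "restricted_growth m (c # cs) = (c \<le> m \<and> restricted_growth (if c = m then Suc m else m) cs)"

lemma first_index_less: "x \<in> set L \<Longrightarrow> first_index L x < length L"
  by (induction L) auto

lemma first_index_nth: "distinct L \<Longrightarrow> i < length L \<Longrightarrow> first_index L (L ! i) = i"
  by (induction L arbitrary: i) (auto simp: nth_Cons nth_mem split: nat.split)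

lemma first_index_map: "inj_on \<tau> (insert x (set L)) \<Longrightarrow> first_index (map \<tau> L) (\<tau> x) = first_index L x"
  by (induction L) (auto simp: inj_on_def)

lemma length_relabel [simp]: "length (relabel L xs) = length xs"
  by (induction L xs rule: relabel.induct) auto

lemma restricted_growth_relabel: "distinct L \<Longrightarrow> restricted_growth (length L) (relabel L xs)"
proof (induction xs arbitrary: L)
  case Nil
  then show ?case by simp
next
  case (Cons x xs)
  then show ?case
    using first_index_less[of x L] Cons.IH[of "L @ [x]"] by (cases "x \<in> set L") auto
qed

lemma relabel_map: "inj_on \<tau> (set L \<union> set xs) \<Longrightarrow> relabel (map \<tau> L) (map \<tau> xs) = relabel L xs"
proof (induction xs arbitrary: L)
  case Nil
  then show ?case by simp
next
  case (Cons x xs)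
  have mem: "\<tau> x \<in> set (map \<tau> L) \<longleftrightarrow> x \<in> set L"
    using Cons.prems by (auto simp: inj_on_def)
  have inj_x: "inj_on \<tau> (insert x (set L))" and inj_L: "inj_on \<tau> (set L \<union> set xs)"
    and inj_Lx: "inj_on \<tau> (set (L @ [x]) \<union> set xs)"
    using Cons.prems by (auto intro: inj_on_subset)
  show ?case
    using mem Cons.IH[OF inj_L] Cons.IH[OF inj_Lx] first_index_map[OF inj_x] by simp
qed

lemma relabel_by_injection:
  assumes "distinct L"
  shows "\<exists>\<tau>. inj_on \<tau> (set L \<union> set xs) \<and> \<tau> ` (set L \<union> set xs) = {..<card (set L \<union> set xs)}
           \<and> (\<forall>i<length L. \<tau> (L ! i) = i) \<and> map \<tau> xs = relabel L xs"
  using assms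
proof (induction xs arbitrary: L)
  case Nil
  have "inj_on (first_index L) (set L)"
    by (rule inj_onI) (metis Nil.prems first_index_nth in_set_conv_nth)
  moreover have "first_index L ` set L = {..<length L}"
    using first_index_less first_index_nth[OF Nil.prems]
    by (auto simp: image_iff) (metis lessThan_iff nth_mem)
  ultimately show ?case
    using first_index_nth[OF Nil.prems] distinct_card[OF Nil.prems] by (intro exI[of _ "first_index L"]) auto
next
  case (Cons x xs)
  show ?case
  proof (cases "x \<in> set L")
    case True
    obtain \<tau> where \<tau>: "inj_on \<tau> (set L \<union> set xs)" "\<tau> ` (set L \<union> set xs) = {..<card (set L \<union> set xs)}"
      "\<forall>i<length L. \<tau> (L ! i) = i" "map \<tau> xs = relabel L xs"
      using Cons.IH[OF Cons.prems] by blast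
    obtain j where "j < length L" "x = L ! j" using True by (metis in_set_conv_nth)
    then have "\<tau> x = first_index L x" using \<tau>(3) first_index_nth[OF Cons.prems] by simp
    moreover have "set L \<union> set (x # xs) = set L \<union> set xs" using True by auto
    ultimately show ?thesis using \<tau> True by (intro exI[of _ \<tau>]) simp
  next
    case False
    then have "distinct (L @ [x])" using Cons.prems by simp
    then obtain \<tau> where \<tau>: "inj_on \<tau> (set (L @ [x]) \<union> set xs)"
      "\<tau> ` (set (L @ [x]) \<union> set xs) = {..<card (set (L @ [x]) \<union> set xs)}"
      "\<forall>i<length (L @ [x]). \<tau> ((L @ [x]) ! i) = i" "map \<tau> xs = relabel (L @ [x]) xs"
      using Cons.IH by blast
    have "\<tau> (L ! i) = i" if "i < length L" for i
      using \<tau>(3)[rule_format, of i] that by (simp add: nth_append)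
    moreover have "\<tau> x = length L"
      using \<tau>(3)[rule_format, of "length L"] by simp
    moreover have "set (L @ [x]) \<union> set xs = set L \<union> set (x # xs)" by auto
    ultimately show ?thesis using \<tau> False by (intro exI[of _ \<tau>]) simp
  qed
qed

lemma extend_inj_on_to_bij:
  fixes \<tau> :: "nat \<Rightarrow> nat"
  assumes "A \<subseteq> {..<n}" "inj_on \<tau> A" "\<tau> ` A \<subseteq> {..<n}"
  obtains \<pi> where "bij_betw \<pi> {..<n} {..<n}" "\<forall>x\<in>A. \<pi> x = \<tau> x"
proof -
  have "finite A" using assms(1) finite_subset by blast
  then have "card ({..<n} - A) = card ({..<n} - \<tau> ` A)"
    using assms by (simp add: card_Diff_subset card_image)
  then obtain g where g: "bij_betw g ({..<n} - A) ({..<n} - \<tau> ` A)"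
    by (metis finite_same_card_bij finite_Diff finite_lessThan)
  define \<pi> where "\<pi> x = (if x \<in> A then \<tau> x else g x)" for x
  have "bij_betw \<pi> A (\<tau> ` A)"
    using bij_betw_imageI[OF assms(2) refl] by (rule bij_betw_cong[THEN iffD1, rotated]) (simp add: \<pi>_def)
  moreover have "bij_betw \<pi> ({..<n} - A) ({..<n} - \<tau> ` A)"
    using g by (rule bij_betw_cong[THEN iffD1, rotated]) (simp add: \<pi>_def)
  ultimately have "bij_betw \<pi> (A \<union> ({..<n} - A)) (\<tau> ` A \<union> ({..<n} - \<tau> ` A))"
    by (rule bij_betw_combine) auto
  moreover have "A \<union> ({..<n} - A) = {..<n}" "\<tau> ` A \<union> ({..<n} - \<tau> ` A) = {..<n}"
    using assms by auto
  ultimately show thesis using that by (simp add: \<pi>_def)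
qed

lemma relabel_by_permutation:
  assumes "set xs \<subseteq> {..<n}"
  obtains \<pi> where "bij_betw \<pi> {..<n} {..<n}" "map \<pi> xs = relabel [] xs"
proof -
  obtain \<tau> where \<tau>: "inj_on \<tau> (set xs)" "\<tau> ` set xs = {..<card (set xs)}" "map \<tau> xs = relabel [] xs"
    using relabel_by_injection[of "[]" xs] by auto
  have "card (set xs) \<le> n" using card_mono[OF _ assms] by simp
  then obtain \<pi> where "bij_betw \<pi> {..<n} {..<n}" "\<forall>x\<in>set xs. \<pi> x = \<tau> x"
    using extend_inj_on_to_bij[OF assms \<tau>(1)] \<tau>(2) by auto
  then show thesis using that \<tau>(3) by (metis map_eq_conv)
qed

section \<open>Exhaustive search over closed walks of length 8\<close>

definition class_directions :: "nat list list" where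
  "class_directions =
     [[0, 1, 0, 2, 0, 1, 0, 2], [0, 1, 0, 2, 3, 1, 2, 3], [0, 1, 0, 2, 3, 1, 3, 2],
      [0, 1, 0, 2, 1, 3, 2, 3], [0, 1, 2, 3, 0, 1, 2, 3], [0, 1, 2, 3, 0, 1, 3, 2],
      [0, 1, 2, 0, 3, 2, 1, 3]]"

lemma walk_class_directions: "map (walk 0) class_directions = map C8 [1..<8]"
  by code_simp

definition has_class_rotation :: "nat list \<Rightarrow> bool" where
  "has_class_rotation cs \<longleftrightarrow> (\<exists>s\<in>set [0..<8]. relabel [] (rotate s cs) \<in> set class_directions)"

text \<open>\<open>search k m visited x prefix\<close> checks every restricted growth continuation of length \<open>k\<close>
  (with next fresh label \<open>m\<close>) of the reversed direction string \<open>prefix\<close> of a walk from \<open>0\<close> to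
  \<open>x\<close>. A continuation is pruned once it revisits a vertex; only its last step may do so, and then
  it must return to \<open>0\<close>.\<close>

fun search :: "nat \<Rightarrow> nat \<Rightarrow> nat list \<Rightarrow> nat \<Rightarrow> nat list \<Rightarrow> bool" where
  "search 0 m visited x prefix = (x \<noteq> 0 \<or> has_class_rotation (rev prefix))"
| "search (Suc k) m visited x prefix =
     (\<forall>c\<in>set [0..<Suc m]. (xor x (2 ^ c) \<in> set visited \<and> k \<noteq> 0) \<or>
        search k (if c = m then Suc m else m) (xor x (2 ^ c) # visited) (xor x (2 ^ c)) (c # prefix))"

lemma search_closed_walks_of_length_8: "search 8 0 [0] 0 []"
  by code_simp

lemma search_sound:
  assumes "search k m visited x prefix" "length cs = k" "restricted_growth m cs"
    "distinct (walk x cs)" "\<forall>y\<in>set (walk x cs). y \<in> set visited \<longrightarrow> y = x" "walk_end x cs = 0"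
  shows "has_class_rotation (rev prefix @ cs)"
  using assms
proof (induction cs arbitrary: k m visited x prefix)
  case Nil
  then show ?case by simp
next
  case (Cons c cs)
  let ?y = "xor x (2 ^ c)" and ?m' = "if c = m then Suc m else m"
  obtain k' where k: "k = Suc k'" "length cs = k'" using Cons.prems(2) by auto
  have "?y \<notin> set visited \<or> k' = 0"
    using Cons.prems(4,5) k by (cases cs) auto
  then have "search k' ?m' (?y # visited) ?y (c # prefix)"
    using Cons.prems(1,3) k by auto
  moreover have "\<forall>z\<in>set (walk ?y cs). z \<in> set (?y # visited) \<longrightarrow> z = ?y"
    using Cons.prems(4,5) by auto
  moreover have "restricted_growth ?m' cs" "distinct (walk ?y cs)" "walk_end ?y cs = 0"
    using Cons.prems(3,4,6) by auto
  ultimately have "has_class_rotation (rev (c # prefix) @ cs)"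
    using Cons.IH k(2) by blast
  then show ?case by simp
qed

lemma qcycle8_rotation_in_class:
  assumes "qcycle n C" "length C = 8"
    and steps: "\<forall>i<length C. d i < n \<and> C ! ((i + 1) mod length C) = xor (C ! i) (2 ^ d i)"
  obtains s where "s < 8" "relabel [] (rotate s (map d [0..<8])) \<in> set class_directions"
proof -
  let ?ds = "map d [0..<8]"
  have ds: "set ?ds \<subseteq> {..<n}" using steps assms(2) by auto
  obtain \<pi> where \<pi>: "bij_betw \<pi> {..<n} {..<n}" "map \<pi> ?ds = relabel [] ?ds"
    using relabel_by_permutation[OF ds] .
  define f where "f = (\<lambda>x. perm_bits n \<pi> (xor x (C ! 0)))"
  have "C ! 0 \<in> qvert n" using assms(1,2) by (simp add: qcycle_def subset_iff)
  then have "qaut n f" unfolding f_def by (rule qautI[OF \<pi>(1)])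
  moreover have "map f C = walk 0 (relabel [] ?ds)" "walk_end 0 (relabel [] ?ds) = 0"
    using translate_rotate_cycle_eq_walk[OF steps, of 0 \<pi>] \<pi> assms(2) by (simp_all add: f_def)
  ultimately have "distinct (walk 0 (relabel [] ?ds))" "walk_end 0 (relabel [] ?ds) = 0"
    using assms(1) qaut_inj_on
    by (auto simp: qcycle_def distinct_map intro: inj_on_subset simp flip: \<open>map f C = _\<close>)
  then have "has_class_rotation (relabel [] ?ds)"
    using search_sound[OF search_closed_walks_of_length_8, of "relabel [] ?ds"]
      restricted_growth_relabel[of "[]" ?ds] by simp
  then obtain s where "s < 8" "relabel [] (rotate s (relabel [] ?ds)) \<in> set class_directions"
    by (auto simp: has_class_rotation_def)
  moreover have "relabel [] (rotate s (relabel [] ?ds)) = relabel [] (rotate s ?ds)"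
  proof -
    have "rotate s (relabel [] ?ds) = map \<pi> (rotate s ?ds)"
      by (simp only: \<pi>(2)[symmetric] rotate_map)
    moreover have "inj_on \<pi> (set [] \<union> set (rotate s ?ds))"
      using \<pi>(1) ds by (auto simp: bij_betw_def intro: inj_on_subset)
    ultimately show ?thesis using relabel_map[of \<pi> "[]"] by simp
  qed
  ultimately show thesis using that by simp
qed

lemma qcycle8_maps_onto_C8:
  assumes "qcycle n C" "length C = 8"
  obtains k where "k \<in> {1..7}" "maps_cycle_onto n C (C8 k)"
proof -
  obtain d where steps: "\<forall>i<length C. d i < n \<and> C ! ((i + 1) mod length C) = xor (C ! i) (2 ^ d i)"
    using qcycle_directions[OF assms(1)] .
  obtain s where s: "s < 8" "relabel [] (rotate s (map d [0..<8])) \<in> set class_directions"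
    using qcycle8_rotation_in_class[OF assms steps] .
  let ?D = "rotate s (map d [0..<8])"
  have "set ?D \<subseteq> {..<n}" using steps assms(2) by auto
  then obtain \<pi> where \<pi>: "bij_betw \<pi> {..<n} {..<n}" "map \<pi> ?D = relabel [] ?D"
    by (rule relabel_by_permutation)
  define f where "f = (\<lambda>x. perm_bits n \<pi> (xor x (C ! s)))"
  have "C ! s \<in> qvert n" using assms s(1) by (simp add: qcycle_def subset_iff)
  then have "qaut n f" unfolding f_def by (rule qautI[OF \<pi>(1)])
  have "walk 0 (relabel [] ?D) \<in> set (map C8 [1..<8])"
    using s(2) unfolding walk_class_directions[symmetric] by simp
  then obtain k where k: "k \<in> {1..7}" "walk 0 (relabel [] ?D) = C8 k"
    by force
  have "cycle_edges (map f C) = cycle_edges (map f (rotate s C))"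
    by (metis cycle_edges_rotate rotate_map)
  also have "map f (rotate s C) = C8 k"
    using translate_rotate_cycle_eq_walk(1)[OF steps, of s \<pi>] \<pi> s(1) k(2) assms(2) by (simp add: f_def)
  finally show thesis using that \<open>qaut n f\<close> k(1) by (auto simp: maps_cycle_onto_def)
qed

section \<open>Counting outward edges of even vertices\<close>

lemma even_out_edges_eq_sum:
  assumes "set C \<subseteq> qvert n"
  shows "even_out_edges n C = (\<Sum>u\<in>{u \<in> set C. qparity n u = 0}. card {i. i < n \<and> xor u (2 ^ i) \<notin> set C})"
proof -
  let ?E = "{u \<in> set C. qparity n u = 0}"
  let ?S = "Sigma ?E (\<lambda>u. {i. i < n \<and> xor u (2 ^ i) \<notin> set C})"
  let ?g = "\<lambda>(u, i). (u, xor u (2 ^ i))"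
  have "{(u, w). u \<in> set C \<and> qparity n u = 0 \<and> w \<in> qvert n \<and> w \<notin> set C \<and> qadj n u w} = ?g ` ?S"
    using assms by (auto simp: qadj_iff_xor qvert_def xor_power2_less image_iff subset_iff)
  moreover have "inj_on ?g ?S"
  proof (rule inj_onI, clarsimp)
    fix u i j assume "xor u (2 ^ i) = xor u (2 ^ j :: nat)"
    then have "(2::nat) ^ i = 2 ^ j" by (metis xor_xor_cancel_left xor.commute)
    then show "i = j" by simp
  qed
  moreover have "card ?S = (\<Sum>u\<in>?E. card {i. i < n \<and> xor u (2 ^ i) \<notin> set C})"
    by (rule card_SigmaI) auto
  ultimately show ?thesis unfolding even_out_edges_def by (simp add: card_image)
qed

lemma card_outside_directions:
  fixes C :: "nat list" and u :: nat
  assumes "set C \<subseteq> {..<2 ^ m}" "u < 2 ^ m" "m \<le> n"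
  shows "card {i. i < n \<and> xor u (2 ^ i) \<notin> set C} = card {i. i < m \<and> xor u (2 ^ i) \<notin> set C} + (n - m)"
proof -
  have "\<not> xor u (2 ^ i) < 2 ^ m" if "m \<le> i" for i
    using assms(2) that by (auto simp: less_power2_iff_bits bit_xor_iff bit_exp_iff)
  then have "{i. i < n \<and> xor u (2 ^ i) \<notin> set C} = {i. i < m \<and> xor u (2 ^ i) \<notin> set C} \<union> {m..<n}"
    using assms(1,3) by (auto simp: subset_iff)
  moreover have "{i. i < m \<and> xor u (2 ^ i) \<notin> set C} \<inter> {m..<n} = {}" by auto
  ultimately show ?thesis by (simp add: card_Un_disjoint)
qed

lemma even_out_edges_lift:
  fixes C :: "nat list"
  assumes "set C \<subseteq> {..<2 ^ m}" "m \<le> n"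
  shows "even_out_edges n C = even_out_edges m C + card {u \<in> set C. qparity m u = 0} * (n - m)"
proof -
  have "(2::nat) ^ m \<le> 2 ^ n" using assms(2) by (simp add: power_increasing)
  then have sub: "set C \<subseteq> qvert n" "set C \<subseteq> qvert m"
    using assms(1) by (auto simp: qvert_def subset_iff intro: less_le_trans)
  have "u < 2 ^ m" if "u \<in> set C" for u using assms(1) that by auto
  then have par: "qparity n u = qparity m u"
    and card: "card {i. i < n \<and> xor u (2 ^ i) \<notin> set C} = card {i. i < m \<and> xor u (2 ^ i) \<notin> set C} + (n - m)"
    if "u \<in> set C" for u
    using that qparity_bounded[OF _ assms(2)] card_outside_directions[OF assms(1) _ assms(2)] by blast+
  have "{u \<in> set C. qparity n u = 0} = {u \<in> set C. qparity m u = 0}"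
    using par by auto
  then have "even_out_edges n C
      = (\<Sum>u\<in>{u \<in> set C. qparity m u = 0}. card {i. i < m \<and> xor u (2 ^ i) \<notin> set C} + (n - m))"
    unfolding even_out_edges_eq_sum[OF sub(1)] using card by (intro sum.cong) auto
  then show ?thesis unfolding even_out_edges_eq_sum[OF sub(2)] by (simp add: sum.distrib)
qed

lemma even_out_edges_eq_sum_list:
  assumes "set C \<subseteq> qvert n"
  shows "even_out_edges n C = (\<Sum>u\<in>set (filter (\<lambda>u. qparity n u = 0) C).
           length (filter (\<lambda>i. xor u (2 ^ i) \<notin> set C) [0..<n]))"
  unfolding even_out_edges_eq_sum[OF assms] card_less_eq_length_filter by (simp add: Collect_conj_eq)

section \<open>The seven cycles\<close>

lemma C8_subset_Q4: "set (C8 k) \<subseteq> {..<2 ^ 4}"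
  by (auto simp: C8_def)

lemma C8_subset_qvert: "4 \<le> n \<Longrightarrow> set (C8 k) \<subseteq> qvert n"
  using C8_subset_Q4[of k] power_increasing[of 4 n "2::nat"] by (auto simp: qvert_def)

lemma C8_closed_walks:
  "list_all (\<lambda>k. distinct (C8 k) \<and> length (C8 k) = 8 \<and>
     (\<forall>i\<in>set [0..<8]. \<exists>j\<in>set [0..<4]. C8 k ! ((i + 1) mod 8) = xor (C8 k ! i) (2 ^ j))) [1..<8]"
  by code_simp

lemma qcycle_C8:
  assumes "4 \<le> n" "k \<in> {1..7}"
  shows "qcycle n (C8 k)" "length (C8 k) = 8"
proof -
  have "k \<in> set [1..<8]" using assms(2) by auto
  with C8_closed_walks have "distinct (C8 k) \<and> length (C8 k) = 8 \<and>
      (\<forall>i\<in>set [0..<8]. \<exists>j\<in>set [0..<4]. C8 k ! ((i + 1) mod 8) = xor (C8 k ! i) (2 ^ j))"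
    unfolding list_all_iff by blast
  then have C8: "distinct (C8 k)" "length (C8 k) = 8"
    "\<forall>i\<in>set [0..<8]. \<exists>j\<in>set [0..<4]. C8 k ! ((i + 1) mod 8) = xor (C8 k ! i) (2 ^ j)"
    by auto
  have "qadj n (C8 k ! i) (C8 k ! ((i + 1) mod 8))" if i: "i < 8" for i
  proof -
    obtain j where j: "j < 4" "C8 k ! ((i + 1) mod 8) = xor (C8 k ! i) (2 ^ j)"
      using bspec[OF C8(3), of i] i by auto
    have "j < n" using j(1) assms(1) by linarith
    moreover have "C8 k ! i \<in> qvert n"
      using nth_mem[of i "C8 k"] C8(2) i C8_subset_qvert[OF assms(1), of k] by auto
    ultimately show ?thesis unfolding qadj_iff_xor using j(2) by blast
  qed
  then have "\<forall>i<length (C8 k). qadj n (C8 k ! i) (C8 k ! ((i + 1) mod length (C8 k)))"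
    using C8(2) by simp
  then show "qcycle n (C8 k)" using C8 C8_subset_qvert[OF assms(1)] by (simp add: qcycle_def)
  show "length (C8 k) = 8" by (fact C8(2))
qed

lemma C8_distance_sums_distinct: "distinct (map (\<lambda>k. distance_sum 4 (set (C8 k))) [1..<8])"
  unfolding distance_sum_def hamming_eq_length_filter by code_simp

lemma C8_distance_sum_inj:
  assumes "4 \<le> n" "j \<in> {1..7}" "k \<in> {1..7}"
    and "distance_sum n (set (C8 j)) = distance_sum n (set (C8 k))"
  shows "j = k"
proof -
  have "distance_sum n (set (C8 i)) = distance_sum 4 (set (C8 i))" for i
    unfolding distance_sum_def using C8_subset_Q4[of i] assms(1)
    by (intro sum.cong refl) (auto simp: hamming_bounded subset_iff)
  then have "distance_sum 4 (set (C8 j)) = distance_sum 4 (set (C8 k))" using assms(4) by simp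
  moreover have "inj_on (\<lambda>k. distance_sum 4 (set (C8 k))) {1..7}"
    using C8_distance_sums_distinct by (simp add: distinct_map flip: atLeastLessThanSuc_atLeastAtMost)
  ultimately show ?thesis using assms(2,3) by (meson inj_onD)
qed

lemma C8_even_out_edges_Q4:
  "[even_out_edges 4 (C8 1), even_out_edges 4 (C8 2), even_out_edges 4 (C8 3), even_out_edges 4 (C8 4),
    even_out_edges 4 (C8 5), even_out_edges 4 (C8 6), even_out_edges 4 (C8 7)] = [4, 7, 6, 6, 8, 8, 8]"
  unfolding even_out_edges_eq_sum_list[OF C8_subset_qvert[OF order_refl]] qparity_eq_length_filter
  by code_simp

lemma C8_even_vertices:
  assumes "k \<in> {1..7}"
  shows "card {u \<in> set (C8 k). qparity 4 u = 0} = 4"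
proof -
  have "list_all (\<lambda>k. card (set (filter (\<lambda>u. length (filter (bit u) [0..<4]) mod 2 = 0) (C8 k))) = 4) [1..<8]"
    by code_simp
  moreover have "k \<in> set [1..<8]" using assms by auto
  moreover have "{u \<in> set (C8 k). qparity 4 u = 0} = set (filter (\<lambda>u. length (filter (bit u) [0..<4]) mod 2 = 0) (C8 k))"
    by (simp add: qparity_eq_length_filter)
  ultimately show ?thesis by (simp add: list_all_iff)
qed

lemma C8_non_isomorphic:
  assumes "4 \<le> n" "j \<in> {1..7}" "k \<in> {1..7}" "maps_cycle_onto n (C8 j) (C8 k)"
  shows "j = k"
proof -
  have "C8 j \<noteq> []" by (simp add: C8_def)
  then have "distance_sum n (set (C8 k)) = distance_sum n (set (C8 j))"
    using maps_cycle_onto_distance_sum[OF assms(4)] C8_subset_qvert[OF assms(1)] by blast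
  then show ?thesis using C8_distance_sum_inj[OF assms(1,3,2)] by simp
qed

lemma qcycle8_unique_class:
  assumes "4 \<le> n" "qcycle n C" "length C = 8"
  shows "\<exists>!k. k \<in> {1..7} \<and> maps_cycle_onto n C (C8 k)"
proof -
  obtain k where k: "k \<in> {1..7}" "maps_cycle_onto n C (C8 k)"
    using qcycle8_maps_onto_C8[OF assms(2,3)] .
  have C: "C \<noteq> []" "set C \<subseteq> qvert n" using assms(2) by (auto simp: qcycle_def)
  have "j = k" if "j \<in> {1..7}" "maps_cycle_onto n C (C8 j)" for j
    using maps_cycle_onto_distance_sum[OF that(2) C] maps_cycle_onto_distance_sum[OF k(2) C]
      C8_distance_sum_inj[OF assms(1) that(1) k(1)] by simp
  with k show ?thesis by blast
qed

lemma even_out_edges_C8: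
  assumes "4 \<le> n" "k \<in> {1..7}"
  shows "even_out_edges n (C8 k) = even_out_edges 4 (C8 k) + 4 * (n - 4)"
  using even_out_edges_lift[OF C8_subset_Q4 assms(1)] C8_even_vertices[OF assms(2)] by simp

theorem mainTheorem9:
  fixes n :: nat
  assumes "n \<ge> 4"
  shows "(\<forall>k \<in> {1..7}. qcycle n (C8 k) \<and> length (C8 k) = 8)
    \<and> (\<forall>C. qcycle n C \<and> length C = 8 \<longrightarrow>
          (\<exists>!k. k \<in> {1..7} \<and> maps_cycle_onto n C (C8 k)))
    \<and> (\<forall>j \<in> {1..7}. \<forall>k \<in> {1..7}. j \<noteq> k \<longrightarrow> \<not> maps_cycle_onto n (C8 j) (C8 k))
    \<and> even_out_edges n (C8 1) = 4 * n - 12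
    \<and> even_out_edges n (C8 2) = 4 * n - 9
    \<and> even_out_edges n (C8 3) = 4 * n - 10
    \<and> even_out_edges n (C8 4) = 4 * n - 10
    \<and> even_out_edges n (C8 5) = 4 * n - 8
    \<and> even_out_edges n (C8 6) = 4 * n - 8
    \<and> even_out_edges n (C8 7) = 4 * n - 8"
proof -
  have "even_out_edges 4 (C8 1) = 4" "even_out_edges 4 (C8 2) = 7" "even_out_edges 4 (C8 3) = 6"
    "even_out_edges 4 (C8 4) = 6" "even_out_edges 4 (C8 5) = 8" "even_out_edges 4 (C8 6) = 8"
    "even_out_edges 4 (C8 7) = 8"
    using C8_even_out_edges_Q4 by simp_all
  then have "even_out_edges n (C8 1) = 4 * n - 12" "even_out_edges n (C8 2) = 4 * n - 9"
    "even_out_edges n (C8 3) = 4 * n - 10" "even_out_edges n (C8 4) = 4 * n - 10"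
    "even_out_edges n (C8 5) = 4 * n - 8" "even_out_edges n (C8 6) = 4 * n - 8"
    "even_out_edges n (C8 7) = 4 * n - 8"
    using even_out_edges_C8[OF assms] assms by simp_all
  with qcycle_C8[OF assms] qcycle8_unique_class[OF assms] C8_non_isomorphic[OF assms]
  show ?thesis by blast
qed

end
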